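(* A finite simple graph $G$ is a circular-arc graph if and only if there is a circular ordering of $V(G)$ in which there are no four distinct vertices $a,b,c,d$ appearing clockwise in this order such that $bd\in E(G)$, $ad\notin E(G)$ and $bc\notin E(G)$ (equivalently, $G$ admits a $CA$-free circular ordering).
   Context: A circular ordering of a finite set is obtained by placing its elements at distinct points of a circle; vertices $a,b,c,d$ "appear clockwise in this order" if traversing the circle clockwise from $a$ one meets $b$, then $c$, then $d$. $CA$ is the circularly ordered pattern on $v_1,v_2,v_3,v_4$ (clockwise in this order) with required edge $v_2v_4$, required non-edges $v_1v_4$ and $v_2v_3$, and the other pairs unspecified; a circular ordering of $G$ is $CA$-free if no four vertices induce a circularly ordered graph represented by this pattern. A circular-arc graph is the intersection graph of a finite family of arcs of a circle. *)

theory Defs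
  imports Complex_Main
begin

definition finite_simple_graph :: "'a set \<Rightarrow> ('a \<Rightarrow> 'a \<Rightarrow> bool) \<Rightarrow> bool" where
  "finite_simple_graph V E \<longleftrightarrow> finite V \<and>
     (\<forall>u v. E u v \<longrightarrow> u \<in> V \<and> v \<in> V) \<and>
     (\<forall>u v. E u v \<longrightarrow> E v u) \<and> (\<forall>v. \<not> E v v)"

text \<open>Closed arc of the unit circle in the complex plane, starting at angle s and
  of angular length l (l \<ge> 0; l \<ge> 2 pi gives the whole circle, l = 0 a point).\<close>
definition arc_of_circle :: "real \<Rightarrow> real \<Rightarrow> complex set" where
  "arc_of_circle s l = (\<lambda>\<theta>. cis \<theta>) ` {s..s + l}"

definition is_arc :: "complex set \<Rightarrow> bool" where
  "is_arc A \<longleftrightarrow> (\<exists>s l. 0 \<le> l \<and> A = arc_of_circle s l)"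

definition circular_arc_graph :: "'a set \<Rightarrow> ('a \<Rightarrow> 'a \<Rightarrow> bool) \<Rightarrow> bool" where
  "circular_arc_graph V E \<longleftrightarrow> (\<exists>A :: 'a \<Rightarrow> complex set.
     (\<forall>v\<in>V. is_arc (A v)) \<and>
     (\<forall>u\<in>V. \<forall>v\<in>V. u \<noteq> v \<longrightarrow> (E u v \<longleftrightarrow> A u \<inter> A v \<noteq> {})))"

text \<open>A circular ordering of V is represented by a linear numbering of V (cut open at
  some point of the circle); clockwise order is then the cyclic order of the numbers.\<close>
definition circular_ordering :: "'a set \<Rightarrow> ('a \<Rightarrow> nat) \<Rightarrow> bool" where
  "circular_ordering V f \<longleftrightarrow> bij_betw f V {0..<card V}"

definition clockwise4 :: "('a \<Rightarrow> nat) \<Rightarrow> 'a \<Rightarrow> 'a \<Rightarrow> 'a \<Rightarrow> 'a \<Rightarrow> bool" where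
  "clockwise4 f a b c d \<longleftrightarrow>
     (f a < f b \<and> f b < f c \<and> f c < f d) \<or>
     (f b < f c \<and> f c < f d \<and> f d < f a) \<or>
     (f c < f d \<and> f d < f a \<and> f a < f b) \<or>
     (f d < f a \<and> f a < f b \<and> f b < f c)"

definition CA_free :: "'a set \<Rightarrow> ('a \<Rightarrow> 'a \<Rightarrow> bool) \<Rightarrow> ('a \<Rightarrow> nat) \<Rightarrow> bool" where
  "CA_free V E f \<longleftrightarrow> \<not> (\<exists>a\<in>V. \<exists>b\<in>V. \<exists>c\<in>V. \<exists>d\<in>V.
     distinct [a, b, c, d] \<and> clockwise4 f a b c d \<and> E b d \<and> \<not> E a d \<and> \<not> E b c)"

end

(* Sort the arcs of an arc model by their starting points. Two arcs meet iff one of them,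
   swept clockwise from its start, reaches the start of the other. So if a, b, c, d are clockwise
   and bd is an edge, either b's arc reaches d's start and thereby passes c's, or d's arc reaches
   b's start and thereby passes a's; hence bc or ad is an edge.
   Conversely, given a CA-free ordering, let the arc of v start at v and end at the last vertex
   of the maximal run of neighbours of v that follows it clockwise. If an edge u v were covered
   by neither run, the first non-neighbour c of u after its run and the first non-neighbour a
   of v after its run would make a, u, c, v a copy of the pattern. *)

theory Submission
  imports Defs "HOL-Library.Real_Mod"
begin

section \<open>Arcs of the unit circle\<close>

lemma cis_eq_cis_iff: "cis x = cis y \<longleftrightarrow> (\<exists>k::int. x = y + 2 * pi * k)"
proof -
  have "cis x = cis y \<longleftrightarrow> sin x = sin y \<and> cos x = cos y"
    by (auto simp: complex_eq_iff)
  then show ?thesis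
    using sin_cos_eq_iff by metis
qed

lemma arc_of_circle_rmod: "arc_of_circle (s rmod (2 * pi)) l = arc_of_circle s l"
proof -
  define k where "k = \<lfloor>s / (2 * pi)\<rfloor>"
  have s: "s rmod (2 * pi) = s - 2 * pi * k"
    by (simp add: rmod_def k_def)
  have "(\<lambda>\<theta>. cis (\<theta> + 2 * pi * k)) ` {s - 2 * pi * k..s - 2 * pi * k + l} = cis ` {s..s + l}"
    by (simp add: image_image[of cis "\<lambda>\<theta>. \<theta> + 2 * pi * k", symmetric] image_add_atLeastAtMost')
  moreover have "cis (\<theta> + 2 * pi * k) = cis \<theta>" for \<theta>
    by (auto simp: cis_eq_cis_iff)
  ultimately show ?thesis
    unfolding arc_of_circle_def s by simp
qed

lemma is_arc_arc_of_circle: "0 \<le> l \<Longrightarrow> is_arc (arc_of_circle s l)"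
  unfolding is_arc_def by blast

lemma arc_of_circle_Int_iff:
  assumes "0 \<le> l" "0 \<le> l'"
  shows "arc_of_circle s l \<inter> arc_of_circle s' l' \<noteq> {} \<longleftrightarrow>
         (\<exists>k::int. s' + 2 * pi * k \<le> s + l \<and> s \<le> s' + l' + 2 * pi * k)"
proof
  assume "arc_of_circle s l \<inter> arc_of_circle s' l' \<noteq> {}"
  then obtain \<theta> \<phi> where "\<theta> \<in> {s..s + l}" "\<phi> \<in> {s'..s' + l'}" "cis \<theta> = cis \<phi>"
    unfolding arc_of_circle_def by fastforce
  moreover obtain k :: int where "\<theta> = \<phi> + 2 * pi * k"
    using \<open>cis \<theta> = cis \<phi>\<close> cis_eq_cis_iff by blast
  ultimately show "\<exists>k::int. s' + 2 * pi * k \<le> s + l \<and> s \<le> s' + l' + 2 * pi * k"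
    by (intro exI[of _ k]) auto
next
  assume "\<exists>k::int. s' + 2 * pi * k \<le> s + l \<and> s \<le> s' + l' + 2 * pi * k"
  then obtain k :: int where k: "s' + 2 * pi * k \<le> s + l" "s \<le> s' + l' + 2 * pi * k"
    by blast
  define \<theta> where "\<theta> = max s (s' + 2 * pi * k)"
  have "\<theta> \<in> {s..s + l}" "\<theta> - 2 * pi * k \<in> {s'..s' + l'}"
    using k assms by (auto simp: \<theta>_def)
  moreover have "cis \<theta> = cis (\<theta> - 2 * pi * k)"
    by (auto simp: cis_eq_cis_iff)
  ultimately show "arc_of_circle s l \<inter> arc_of_circle s' l' \<noteq> {}"
    unfolding arc_of_circle_def by blast
qed

lemma arc_of_circle_Int_iff_ordered:
  assumes "0 \<le> l" "0 \<le> l'" "0 \<le> s" "s \<le> s'" "s' < 2 * pi"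
  shows "arc_of_circle s l \<inter> arc_of_circle s' l' \<noteq> {} \<longleftrightarrow>
         s' \<le> s + l \<or> s + 2 * pi \<le> s' + l'"
proof -
  have "s' \<le> s + l \<or> s + 2 * pi \<le> s' + l'"
    if "s' + 2 * pi * k \<le> s + l" "s \<le> s' + l' + 2 * pi * k" for k :: int
  proof (cases "k \<ge> 0")
    case True
    then have "0 \<le> 2 * pi * k"
      by simp
    then show ?thesis
      using that by linarith
  next
    case False
    then have "2 * pi * k \<le> 2 * pi * (-1)"
      by (intro mult_left_mono) auto
    then show ?thesis
      using that by linarith
  qed
  moreover have "\<exists>k::int. s' + 2 * pi * k \<le> s + l \<and> s \<le> s' + l' + 2 * pi * k"
    if "s' \<le> s + l \<or> s + 2 * pi \<le> s' + l'"
    using that assms by (elim disjE; intro exI[of _ 0] exI[of _ "-1"]) auto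
  ultimately show ?thesis
    using arc_of_circle_Int_iff[OF assms(1,2)] by blast
qed

text \<open>Whether the angle crosses 0 is decided by \<open>f\<close>, not by \<open>s\<close>,
  so that arcs with a common start are still passed in the order given by \<open>f\<close>.\<close>

definition clockwise_gap :: "('a \<Rightarrow> nat) \<Rightarrow> ('a \<Rightarrow> real) \<Rightarrow> 'a \<Rightarrow> 'a \<Rightarrow> real" where
  "clockwise_gap f s u v = s v - s u + (if f v < f u then 2 * pi else 0)"

lemma arc_of_circle_Int_iff_clockwise_gap:
  assumes "s u \<in> {0..<2 * pi}" "s v \<in> {0..<2 * pi}" "0 \<le> l u" "0 \<le> l v" "f u \<noteq> f v"
    and "f u < f v \<Longrightarrow> s u \<le> s v" "f v < f u \<Longrightarrow> s v \<le> s u"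
  shows "arc_of_circle (s u) (l u) \<inter> arc_of_circle (s v) (l v) \<noteq> {} \<longleftrightarrow>
         clockwise_gap f s u v \<le> l u \<or> clockwise_gap f s v u \<le> l v"
proof (cases "f u < f v")
  case True
  then show ?thesis
    using assms arc_of_circle_Int_iff_ordered[of "l u" "l v" "s u" "s v"]
    by (auto simp: clockwise_gap_def)
next
  case False
  then show ?thesis
    using assms arc_of_circle_Int_iff_ordered[of "l v" "l u" "s v" "s u"]
    by (auto simp: clockwise_gap_def Int_commute)
qed

section \<open>Circular orderings\<close>

definition clockwise3 :: "('a \<Rightarrow> nat) \<Rightarrow> 'a \<Rightarrow> 'a \<Rightarrow> 'a \<Rightarrow> bool" where
  "clockwise3 f a b c \<longleftrightarrow>
     (f a < f b \<and> f b < f c) \<or> (f b < f c \<and> f c < f a) \<or> (f c < f a \<and> f a < f b)"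

lemma clockwise4_imp_clockwise3:
  "clockwise4 f a b c d \<Longrightarrow> clockwise3 f b c d \<and> clockwise3 f d a b"
  unfolding clockwise4_def clockwise3_def by auto

lemma clockwise4_distinct: "clockwise4 f a b c d \<Longrightarrow> distinct [a, b, c, d]"
  unfolding clockwise4_def by auto

lemma clockwise4_offsets:
  assumes "p < n" "0 < o1" "o1 < o2" "o2 < o3" "o3 < (n::nat)"
    and "f b = p" "f c = (p + o1) mod n" "f d = (p + o2) mod n" "f a = (p + o3) mod n"
  shows "clockwise4 f a b c d"
  using assms unfolding clockwise4_def
  by (cases "p + o1 < n"; cases "p + o2 < n"; cases "p + o3 < n") (auto simp: le_mod_geq)

lemma clockwise_gap_mono:
  assumes "clockwise3 f b c d" "s c < 2 * pi" "0 \<le> s d" "f c < f d \<Longrightarrow> s c \<le> s d"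
  shows "clockwise_gap f s b c \<le> clockwise_gap f s b d"
  using assms unfolding clockwise3_def clockwise_gap_def by auto

lemma sorting_numbering_exists:
  fixes s :: "'a \<Rightarrow> 'b::linorder"
  assumes "finite V"
  obtains f where "bij_betw f V {0..<card V}"
    and "\<And>x y. x \<in> V \<Longrightarrow> y \<in> V \<Longrightarrow> f x < f y \<Longrightarrow> s x \<le> s y"
proof -
  obtain xs where xs: "set xs = V" "distinct xs"
    using finite_distinct_list[OF assms] by blast
  define ys where "ys = sort_key s xs"
  have ys: "set ys = V" "distinct ys" "length ys = card V"
    using xs distinct_card[of ys] by (simp_all add: ys_def)
  have nth: "bij_betw ((!) ys) {0..<card V} V"
    by (rule bij_betw_nth) (use ys in auto)
  define f where "f = the_inv_into {0..<card V} ((!) ys)"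
  have f: "bij_betw f V {0..<card V}"
    unfolding f_def by (rule bij_betw_the_inv_into[OF nth])
  moreover have "s x \<le> s y" if "x \<in> V" "y \<in> V" "f x < f y" for x y
  proof -
    have "ys ! f x = x" "ys ! f y = y"
      using that nth unfolding f_def by (simp_all add: f_the_inv_into_f_bij_betw)
    moreover have "f y < length ys"
      using f \<open>y \<in> V\<close> ys(3) by (auto dest: bij_betw_apply)
    moreover have "sorted (map s ys)"
      by (simp add: ys_def)
    ultimately show ?thesis
      using sorted_nth_mono[of "map s ys" "f x" "f y"] that(3) by simp
  qed
  ultimately show ?thesis
    using that by blast
qed

text \<open>Read \<open>R u v\<close> as: the arc of \<open>u\<close>, swept clockwise, reaches the start of the arc of \<open>v\<close>.\<close>

lemma CA_free_if_adjacency_by_reach: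
  assumes adj: "\<And>u v. u \<in> V \<Longrightarrow> v \<in> V \<Longrightarrow> u \<noteq> v \<Longrightarrow> E u v \<longleftrightarrow> R u v \<or> R v u"
    and reach: "\<And>b c d. b \<in> V \<Longrightarrow> c \<in> V \<Longrightarrow> d \<in> V \<Longrightarrow> clockwise3 f b c d \<Longrightarrow> R b d \<Longrightarrow> R b c"
  shows "CA_free V E f"
  unfolding CA_free_def
proof clarify
  fix a b c d
  assume V: "a \<in> V" "b \<in> V" "c \<in> V" "d \<in> V" and "distinct [a, b, c, d]"
    and cw: "clockwise4 f a b c d" and "E b d" "\<not> E a d" "\<not> E b c"
  then have "R b d \<or> R d b" "\<not> R b c" "\<not> R d a"
    using adj by auto
  then show False
    using reach V clockwise4_imp_clockwise3[OF cw] by blast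
qed

section \<open>Circular-arc graphs have CA-free orderings\<close>

lemma circular_arc_graph_imp_CA_free:
  assumes G: "finite_simple_graph V E" and "circular_arc_graph V E"
  shows "\<exists>f. circular_ordering V f \<and> CA_free V E f"
proof -
  obtain A where arcs: "\<And>v. v \<in> V \<Longrightarrow> is_arc (A v)"
    and A: "\<And>u v. u \<in> V \<Longrightarrow> v \<in> V \<Longrightarrow> u \<noteq> v \<Longrightarrow> E u v \<longleftrightarrow> A u \<inter> A v \<noteq> {}"
    using assms(2) unfolding circular_arc_graph_def by blast
  obtain s0 l where l: "\<And>v. v \<in> V \<Longrightarrow> 0 \<le> l v"
    and A_sl: "\<And>v. v \<in> V \<Longrightarrow> A v = arc_of_circle (s0 v) (l v)"
    using arcs unfolding is_arc_def by metis
  define s where "s v = s0 v rmod (2 * pi)" for v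
  have s: "s v \<in> {0..<2 * pi}" for v
    by (simp add: s_def rmod_nonneg rmod_less)
  have A_s: "A v = arc_of_circle (s v) (l v)" if "v \<in> V" for v
    using A_sl[OF that] by (simp add: s_def arc_of_circle_rmod)
  obtain f where f: "bij_betw f V {0..<card V}"
    and sorted: "\<And>x y. x \<in> V \<Longrightarrow> y \<in> V \<Longrightarrow> f x < f y \<Longrightarrow> s x \<le> s y"
    using sorting_numbering_exists[of V s] G unfolding finite_simple_graph_def by blast
  have "CA_free V E f"
  proof (rule CA_free_if_adjacency_by_reach[where R = "\<lambda>u v. clockwise_gap f s u v \<le> l u"])
    fix u v assume "u \<in> V" "v \<in> V" "u \<noteq> v"
    moreover have "f u \<noteq> f v"
      using f \<open>u \<in> V\<close> \<open>v \<in> V\<close> \<open>u \<noteq> v\<close> by (auto dest: bij_betw_imp_inj_on inj_onD)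
    ultimately show "E u v \<longleftrightarrow> clockwise_gap f s u v \<le> l u \<or> clockwise_gap f s v u \<le> l v"
      using A A_s l s sorted arc_of_circle_Int_iff_clockwise_gap[of s u v l f] by simp
  next
    fix b c d assume "b \<in> V" "c \<in> V" "d \<in> V" "clockwise3 f b c d"
    then have "clockwise_gap f s b c \<le> clockwise_gap f s b d"
      using s sorted by (intro clockwise_gap_mono) auto
    then show "clockwise_gap f s b d \<le> l b \<Longrightarrow> clockwise_gap f s b c \<le> l b"
      by linarith
  qed
  then show ?thesis
    using f unfolding circular_ordering_def by blast
qed

section \<open>CA-free orderings yield arc models\<close>

lemma circular_ordering_less_card: "circular_ordering V f \<Longrightarrow> v \<in> V \<Longrightarrow> f v < card V"
  by (auto simp: circular_ordering_def dest: bij_betw_apply)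

lemma circular_ordering_inj_on: "circular_ordering V f \<Longrightarrow> inj_on f V"
  by (simp add: circular_ordering_def bij_betw_def)

definition clockwise_successor :: "'a set \<Rightarrow> ('a \<Rightarrow> nat) \<Rightarrow> 'a \<Rightarrow> nat \<Rightarrow> 'a" where
  "clockwise_successor V f v j = the_inv_into V f ((f v + j) mod card V)"

definition clockwise_steps :: "'a set \<Rightarrow> ('a \<Rightarrow> nat) \<Rightarrow> 'a \<Rightarrow> 'a \<Rightarrow> nat" where
  "clockwise_steps V f u v = (f v + card V - f u) mod card V"

definition neighbour_run :: "'a set \<Rightarrow> ('a \<Rightarrow> 'a \<Rightarrow> bool) \<Rightarrow> ('a \<Rightarrow> nat) \<Rightarrow> 'a \<Rightarrow> nat" where
  "neighbour_run V E f v =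
     Max {k. k < card V \<and> (\<forall>j\<in>{1..k}. E v (clockwise_successor V f v j))}"

lemma clockwise_successor:
  assumes "circular_ordering V f" "v \<in> V"
  shows "clockwise_successor V f v j \<in> V"
    and "f (clockwise_successor V f v j) = (f v + j) mod card V"
proof -
  have "0 < card V"
    using circular_ordering_less_card[OF assms] by simp
  then have "(f v + j) mod card V \<in> f ` V"
    using assms(1) by (simp add: circular_ordering_def bij_betw_def)
  then show "clockwise_successor V f v j \<in> V"
    and "f (clockwise_successor V f v j) = (f v + j) mod card V"
    using circular_ordering_inj_on[OF assms(1)]
    by (simp_all add: clockwise_successor_def the_inv_into_into f_the_inv_into_f)
qed

lemma clockwise_steps_eq:
  assumes "circular_ordering V f" "u \<in> V" "v \<in> V"
  shows "clockwise_steps V f u v = (if f v < f u then f v + card V - f u else f v - f u)"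
  using circular_ordering_less_card[OF assms(1,2)] circular_ordering_less_card[OF assms(1,3)]
  by (auto simp: clockwise_steps_def le_mod_geq)

lemma clockwise_steps:
  assumes "circular_ordering V f" "u \<in> V" "v \<in> V" "u \<noteq> v"
  shows "0 < clockwise_steps V f u v"
    and "clockwise_steps V f u v + clockwise_steps V f v u = card V"
    and "clockwise_successor V f u (clockwise_steps V f u v) = v"
proof -
  have "f u \<noteq> f v" "f u < card V" "f v < card V"
    using circular_ordering_inj_on[OF assms(1)] circular_ordering_less_card[OF assms(1)] assms(2-4)
    by (auto dest: inj_onD)
  then show "0 < clockwise_steps V f u v"
    and "clockwise_steps V f u v + clockwise_steps V f v u = card V"
    using clockwise_steps_eq[OF assms(1)] assms(2,3) by auto
  have "f (clockwise_successor V f u (clockwise_steps V f u v)) = f v"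
    using clockwise_successor(2)[OF assms(1,2)] clockwise_steps_eq[OF assms(1-3)]
      \<open>f u < card V\<close> \<open>f v < card V\<close> by (auto simp: le_mod_geq)
  then show "clockwise_successor V f u (clockwise_steps V f u v) = v"
    using circular_ordering_inj_on[OF assms(1)] clockwise_successor(1)[OF assms(1,2)] assms(3)
    by (auto dest: inj_onD)
qed

lemma neighbour_run:
  assumes "circular_ordering V f" "v \<in> V"
  shows "neighbour_run V E f v < card V"
    and "\<And>j. 1 \<le> j \<Longrightarrow> j \<le> neighbour_run V E f v \<Longrightarrow> E v (clockwise_successor V f v j)"
    and "neighbour_run V E f v + 1 < card V \<Longrightarrow>
         \<not> E v (clockwise_successor V f v (neighbour_run V E f v + 1))"
proof -
  define K where "K = {k. k < card V \<and> (\<forall>j\<in>{1..k}. E v (clockwise_successor V f v j))}"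
  define m where "m = neighbour_run V E f v"
  have "0 < card V"
    using circular_ordering_less_card[OF assms] by simp
  then have "0 \<in> K"
    by (simp add: K_def)
  have "finite K"
    by (rule finite_subset[of K "{..<card V}"]) (auto simp: K_def)
  have m: "m = Max K"
    by (simp add: m_def neighbour_run_def K_def)
  have "m \<in> K"
    unfolding m using \<open>finite K\<close> \<open>0 \<in> K\<close> by (metis Max_in empty_iff)
  have max: "\<And>k. k \<in> K \<Longrightarrow> k \<le> m"
    unfolding m using \<open>finite K\<close> by (rule Max_ge)
  from \<open>m \<in> K\<close> have run: "m < card V" "\<And>j. 1 \<le> j \<Longrightarrow> j \<le> m \<Longrightarrow> E v (clockwise_successor V f v j)"
    by (auto simp: K_def)
  then show "neighbour_run V E f v < card V"
    and "\<And>j. 1 \<le> j \<Longrightarrow> j \<le> neighbour_run V E f v \<Longrightarrow> E v (clockwise_successor V f v j)"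
    by (simp_all add: m_def)
  show "\<not> E v (clockwise_successor V f v (neighbour_run V E f v + 1))"
    if "neighbour_run V E f v + 1 < card V"
  proof
    assume "E v (clockwise_successor V f v (neighbour_run V E f v + 1))"
    then have "E v (clockwise_successor V f v j)" if "1 \<le> j" "j \<le> m + 1" for j
      using run(2)[of j] that by (cases "j = m + 1") (auto simp: m_def)
    then have "m + 1 \<in> K"
      using \<open>neighbour_run V E f v + 1 < card V\<close> by (simp add: K_def m_def)
    then show False
      using max[of "m + 1"] by simp
  qed
qed

lemma adjacent_iff_clockwise_steps_le_neighbour_run:
  assumes G: "finite_simple_graph V E" and f: "circular_ordering V f" and free: "CA_free V E f"
    and uv: "u \<in> V" "v \<in> V" "u \<noteq> v"
  shows "E u v \<longleftrightarrow>
    clockwise_steps V f u v \<le> neighbour_run V E f u \<or>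
    clockwise_steps V f v u \<le> neighbour_run V E f v"
    (is "_ \<longleftrightarrow> ?duv \<le> ?mu \<or> ?dvu \<le> ?mv")
proof
  have sym: "E x y \<Longrightarrow> E y x" for x y
    using G by (simp add: finite_simple_graph_def)
  note steps_uv = clockwise_steps[OF f uv] and steps_vu = clockwise_steps[OF f uv(2,1) uv(3)[symmetric]]
  show "E u v" if "?duv \<le> ?mu \<or> ?dvu \<le> ?mv"
    using that
  proof
    assume "?duv \<le> ?mu"
    then show "E u v"
      using neighbour_run(2)[OF f uv(1), of ?duv E] steps_uv by simp
  next
    assume "?dvu \<le> ?mv"
    then have "E v u"
      using neighbour_run(2)[OF f uv(2), of ?dvu E] steps_vu by simp
    then show "E u v"
      by (rule sym)
  qed
  assume "E u v"
  show "?duv \<le> ?mu \<or> ?dvu \<le> ?mv"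
  proof (rule ccontr)
    assume "\<not> (?duv \<le> ?mu \<or> ?dvu \<le> ?mv)"
    then have far: "?mu < ?duv" "?mv < ?dvu"
      by simp_all
    define c where "c = clockwise_successor V f u (?mu + 1)"
    define a where "a = clockwise_successor V f v (?mv + 1)"
    have "\<not> E u c" "\<not> E v a"
      using far neighbour_run(3)[OF f uv(1), of E] neighbour_run(3)[OF f uv(2), of E]
        steps_uv(1,2) steps_vu(1) by (simp_all add: c_def a_def)
    then have "c \<noteq> v" "a \<noteq> u"
      using \<open>E u v\<close> sym by blast+
    then have "?mu + 1 \<noteq> ?duv" "?mv + 1 \<noteq> ?dvu"
      using steps_uv(3) steps_vu(3) by (auto simp: c_def a_def)
    then have offsets: "?mu + 1 < ?duv" "?duv + ?mv + 1 < card V"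
      using far steps_uv(2) by linarith+
    have "f u < card V"
      using circular_ordering_less_card[OF f uv(1)] .
    moreover have fv: "f v = (f u + ?duv) mod card V"
      using clockwise_successor(2)[OF f uv(1), of ?duv] steps_uv(3) by simp
    moreover have "f a = (f u + (?duv + ?mv + 1)) mod card V"
      unfolding a_def clockwise_successor(2)[OF f uv(2)] fv
      by (metis add.assoc mod_add_left_eq)
    ultimately have cw: "clockwise4 f a u c v"
      using clockwise4_offsets[of "f u" "card V" "?mu + 1" ?duv "?duv + ?mv + 1" f u c v a]
        clockwise_successor(2)[OF f uv(1)] offsets by (simp add: c_def)
    moreover have "a \<in> V" "c \<in> V"
      using clockwise_successor(1)[OF f] uv by (simp_all add: a_def c_def)
    moreover have "\<not> E a v"
      using \<open>\<not> E v a\<close> sym by blast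
    ultimately show False
      using free clockwise4_distinct[OF cw] uv \<open>E u v\<close> \<open>\<not> E u c\<close>
      unfolding CA_free_def by blast
  qed
qed

lemma arc_of_circle_steps_Int_iff:
  assumes f: "circular_ordering V f" and uv: "u \<in> V" "v \<in> V" "u \<noteq> v"
  shows "arc_of_circle (2 * pi * f u / card V) (2 * pi * m u / card V) \<inter>
         arc_of_circle (2 * pi * f v / card V) (2 * pi * m v / card V) \<noteq> {} \<longleftrightarrow>
    clockwise_steps V f u v \<le> m u \<or> clockwise_steps V f v u \<le> m v"
proof -
  define n where "n = card V"
  define s where "s x = 2 * pi * f x / n" for x
  define l where "l x = 2 * pi * m x / n" for x
  have fV: "f x < n" if "x \<in> V" for x
    using circular_ordering_less_card[OF f that] by (simp add: n_def)
  have "f u \<noteq> f v"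
    using circular_ordering_inj_on[OF f] uv by (auto dest: inj_onD)
  have n: "0 < n"
    using fV[OF uv(1)] by simp
  have gap: "clockwise_gap f s x y = 2 * pi * clockwise_steps V f x y / n"
    if "x \<in> V" "y \<in> V" for x y
    using clockwise_steps_eq[OF f that] fV[OF that(1)] n
    by (simp add: clockwise_gap_def s_def n_def of_nat_diff field_simps)
  have gap_le: "clockwise_gap f s x y \<le> l x \<longleftrightarrow> clockwise_steps V f x y \<le> m x"
    if "x \<in> V" "y \<in> V" for x y
    using n by (simp add: gap[OF that] l_def divide_le_cancel)
  have "s x \<in> {0..<2 * pi}" if "x \<in> V" for x
    using fV[OF that] n by (simp add: s_def field_simps)
  moreover have "s x \<le> s y" if "f x < f y" for x y
    using that n by (simp add: s_def divide_right_mono)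
  ultimately have "arc_of_circle (s u) (l u) \<inter> arc_of_circle (s v) (l v) \<noteq> {} \<longleftrightarrow>
    clockwise_gap f s u v \<le> l u \<or> clockwise_gap f s v u \<le> l v"
    using uv \<open>f u \<noteq> f v\<close> by (intro arc_of_circle_Int_iff_clockwise_gap) (simp_all add: l_def)
  then show ?thesis
    using gap_le uv by (simp add: s_def l_def n_def)
qed

lemma CA_free_imp_circular_arc_graph:
  assumes "finite_simple_graph V E" "circular_ordering V f" "CA_free V E f"
  shows "circular_arc_graph V E"
proof -
  define A where "A v = arc_of_circle (2 * pi * f v / card V)
    (2 * pi * neighbour_run V E f v / card V)" for v
  have "is_arc (A v)" for v
    by (simp add: A_def is_arc_arc_of_circle)
  moreover have "E u v \<longleftrightarrow> A u \<inter> A v \<noteq> {}" if "u \<in> V" "v \<in> V" "u \<noteq> v" for u v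
    unfolding A_def arc_of_circle_steps_Int_iff[OF assms(2) that]
    by (rule adjacent_iff_clockwise_steps_le_neighbour_run[OF assms that])
  ultimately show ?thesis
    unfolding circular_arc_graph_def by blast
qed

theorem proposition2:
  fixes V :: "'a set" and E :: "'a \<Rightarrow> 'a \<Rightarrow> bool"
  assumes "finite_simple_graph V E"
  shows "circular_arc_graph V E \<longleftrightarrow> (\<exists>f. circular_ordering V f \<and> CA_free V E f)"
  using circular_arc_graph_imp_CA_free[OF assms] CA_free_imp_circular_arc_graph[OF assms] by blast

end
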